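(* Let $\ell,r$ be integers with $r\ge 2$ and $r+1\le\ell\le 2r-1$, and let $m=m_{r,\ell}$. Define $h(q)=(q)_{r-1}\cdot\bigl(2r-\ell+2(m-q)(\ell-r)\bigr)$ for integers $q\in[0,m]$. Then $h(q)<h(m-1)$ for all integers $q\in[0,m]\setminus\{m-1\}$.
   Context: For an integer $z$ and positive integer $k$, $(z)_k=z(z-1)\cdots(z-k+1)$ if $z>k-1$ and $(z)_k=0$ otherwise. $m_{r,\ell}$ is the unique integer $k\ge r$ maximizing $f(k)=\frac{(k-1)(k-2)\cdots(k-r+1)}{k^{\ell-1}}$ over all integers $k\ge r$. *)

theory Defs
  imports Complex_Main
begin

definition ffact_int :: "int \<Rightarrow> nat \<Rightarrow> int" where
  "ffact_int z k = (if z > int k - 1 then (\<Prod>i<k. z - int i) else 0)"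

definition f_rl :: "int \<Rightarrow> int \<Rightarrow> int \<Rightarrow> real" where
  "f_rl r l k = (\<Prod>i\<in>{1..nat (r - 1)}. real_of_int (k - int i)) / (real_of_int k) ^ nat (l - 1)"

definition m_rl :: "int \<Rightarrow> int \<Rightarrow> int" where
  "m_rl r l = (THE k. k \<ge> r \<and> (\<forall>j. j \<ge> r \<longrightarrow> f_rl r l j \<le> f_rl r l k))"

end

theory Submission
  imports Defs
begin

(* For k >= r one has f(k) / f(k + 1) = (k - s) (k + 1)^n / k^(n + 1) with s = r - 1 and
   n = l - 1, so f decreases at k exactly when the integer D(k) = (k - s) (k + 1)^n - k^(n + 1)
   is positive.  D never vanishes, since k + 1 is coprime to k, and once positive it stays
   positive, since psi(t) = (1 + t)^n (1 - s t) is unimodal on t >= 0 with psi(0) = 1 and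
   D(k) > 0 means psi(1/k) > 1.  Hence m is the first k >= r with D(k) > 0.
   Comparing (1 + 1/k)^n with (2k + 1 + n) / (2k + 1 - n) shows that D(m) > 0 forces
   (r - 1) l < 2 (l - r) m, and a three-term binomial lower bound for (j + 1)^n shows that
   D(m - 1) < 0 forces 2 (l - r) (m - 1) < (r - 1) (r + 3 (l - r)).  Because
   (q + 1)_s (q + 1 - s) = (q)_s (q + 1), these two inequalities say precisely that h increases
   on [r - 1, m - 1] and that h m < h (m - 1); below r - 1 the falling factorial vanishes. *)

lemma cross_mult_less_iff:
  fixes A B X Y c d :: "'a::linordered_idom"
  assumes cross: "B * X = A * Y" and "0 < A" and "0 < X"
  shows "A * c < B * d \<longleftrightarrow> X * c < Y * d"
    and "B * d < A * c \<longleftrightarrow> Y * d < X * c"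
proof -
  have "B * d * X = A * (Y * d)" "A * c * X = A * (X * c)"
    using cross by (simp_all add: ac_simps)
  then show "A * c < B * d \<longleftrightarrow> X * c < Y * d" "B * d < A * c \<longleftrightarrow> Y * d < X * c"
    using assms(2,3) by (metis mult_less_cancel_left_pos mult_less_cancel_right_pos)+
qed

lemma int_less_by_ascent:
  fixes g :: "int \<Rightarrow> 'a::order"
  assumes ascent: "\<And>k. a \<le> k \<Longrightarrow> k < b \<Longrightarrow> g k < g (k + 1)"
    and "a \<le> q" and "q < b"
  shows "g q < g b"
proof -
  have "i \<le> b \<longrightarrow> g q < g i" if "q < i" for i
    using that
  proof (induction i rule: int_gr_induct)
    case base
    show ?case using ascent \<open>a \<le> q\<close> by simp
  next
    case (step i)
    then show ?case using ascent[of i] \<open>a \<le> q\<close> by force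
  qed
  then show ?thesis using \<open>q < b\<close> by simp
qed

lemma int_less_by_descent:
  fixes g :: "int \<Rightarrow> 'a::order"
  assumes descent: "\<And>k. b \<le> k \<Longrightarrow> g (k + 1) < g k" and "b < q"
  shows "g q < g b"
  using \<open>b < q\<close>
proof (induction q rule: int_gr_induct)
  case base
  show ?case using descent by simp
next
  case (step q)
  then show ?case using descent[of q] by force
qed

lemma The_argmax_eq_peak:
  fixes g :: "int \<Rightarrow> 'a::linorder"
  assumes "r \<le> K"
    and ascent: "\<And>k. r \<le> k \<Longrightarrow> k < K \<Longrightarrow> g k < g (k + 1)"
    and descent: "\<And>k. K \<le> k \<Longrightarrow> g (k + 1) < g k"
  shows "(THE k. r \<le> k \<and> (\<forall>j. r \<le> j \<longrightarrow> g j \<le> g k)) = K"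
proof -
  have below_peak: "g j < g K" if "r \<le> j" "j \<noteq> K" for j
  proof (cases "j < K")
    case True
    then show ?thesis using int_less_by_ascent[where g = g, OF ascent] that by blast
  next
    case False
    then show ?thesis using int_less_by_descent[where g = g, OF descent] that by simp
  qed
  show ?thesis
  proof (rule the_equality)
    show "r \<le> K \<and> (\<forall>j. r \<le> j \<longrightarrow> g j \<le> g K)"
      using \<open>r \<le> K\<close> below_peak by (metis order.order_iff_strict)
  next
    fix k assume "r \<le> k \<and> (\<forall>j. r \<le> j \<longrightarrow> g j \<le> g k)"
    then show "k = K" using below_peak \<open>r \<le> K\<close> by (meson not_le)
  qed
qed

lemma int_upward_closed_threshold:
  fixes P :: "int \<Rightarrow> bool"
  assumes "r \<le> k\<^sub>0" and "P k\<^sub>0" and up: "\<And>k. r \<le> k \<Longrightarrow> P k \<Longrightarrow> P (k + 1)"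
  obtains K where "r \<le> K" and "\<And>k. r \<le> k \<Longrightarrow> P k \<longleftrightarrow> K \<le> k"
proof -
  define K where "K = r + int (LEAST t. P (r + int t))"
  have "P (r + int (nat (k\<^sub>0 - r)))" using assms(1,2) by simp
  then have "P K" unfolding K_def by (rule LeastI)
  have "\<not> P k" if "r \<le> k" "k < K" for k
  proof -
    have "nat (k - r) < (LEAST t. P (r + int t))" using that K_def by simp
    then have "\<not> P (r + int (nat (k - r)))" by (rule not_less_Least)
    then show ?thesis using that by simp
  qed
  moreover have "r \<le> K" unfolding K_def by simp
  moreover have "P k" if "K \<le> k" for k
    using that
  proof (induction k rule: int_ge_induct)
    case base
    show ?case by (fact \<open>P K\<close>)
  next
    case (step k)
    then show ?case using up \<open>r \<le> K\<close> by simp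
  qed
  ultimately show ?thesis using that[of K] by force
qed

lemma ffact_int_pos:
  assumes "int k \<le> q"
  shows "0 < ffact_int q k"
  using assms unfolding ffact_int_def by (auto intro: prod_pos)

lemma ffact_int_succ:
  assumes "int k \<le> q"
  shows "ffact_int (q + 1) k * (q + 1 - int k) = ffact_int q k * (q + 1)"
proof -
  have "(\<Prod>i<k. q + 1 - int i) * (q + 1 - int k) = (\<Prod>i<Suc k. q + 1 - int i)"
    by simp
  also have "\<dots> = (q + 1) * (\<Prod>i<k. q - int i)"
    unfolding prod.lessThan_Suc_shift by (simp add: algebra_simps)
  finally show ?thesis
    using assms unfolding ffact_int_def by (simp add: mult.commute)
qed

lemma f_rl_eq_ffact_int:
  assumes "1 \<le> r" and "r \<le> k"
  shows "f_rl r l k = of_int (ffact_int (k - 1) (nat (r - 1))) / of_int k ^ nat (l - 1)"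
proof -
  have "(\<Prod>i\<in>{1..nat (r - 1)}. real_of_int (k - int i)) = (\<Prod>i<nat (r - 1). of_int (k - 1 - int i))"
    unfolding One_nat_def prod.atLeast1_atMost_eq by (simp add: algebra_simps)
  then show ?thesis
    using assms unfolding f_rl_def ffact_int_def by simp
qed

lemma f_rl_pos:
  assumes "1 \<le> r" and "r \<le> k"
  shows "0 < f_rl r l k"
  using assms ffact_int_pos[of "nat (r - 1)" "k - 1"] by (simp add: f_rl_eq_ffact_int)

lemma f_rl_succ_cross:
  assumes "1 \<le> r" and "r \<le> k"
  shows "f_rl r l (k + 1) * of_int ((k - (r - 1)) * (k + 1) ^ nat (l - 1))
       = f_rl r l k * of_int (k ^ (nat (l - 1) + 1))"
proof -
  define F where "F = ffact_int (k - 1) (nat (r - 1))"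
  define n where "n = nat (l - 1)"
  have succ: "ffact_int k (nat (r - 1)) * (k - (r - 1)) = F * k"
    using ffact_int_succ[of "nat (r - 1)" "k - 1"] assms unfolding F_def by simp
  have "f_rl r l (k + 1) * of_int ((k - (r - 1)) * (k + 1) ^ n)
        = of_int (ffact_int k (nat (r - 1)) * (k - (r - 1)))"
    using f_rl_eq_ffact_int[of r "k + 1" l] assms unfolding n_def by simp
  also have "\<dots> = of_int F / of_int k ^ n * of_int (k ^ (n + 1))"
    unfolding succ using assms by simp
  also have "\<dots> = f_rl r l k * of_int (k ^ (n + 1))"
    using f_rl_eq_ffact_int[of r k l] assms unfolding F_def n_def by simp
  finally show ?thesis unfolding n_def .
qed

definition descent_margin :: "int \<Rightarrow> nat \<Rightarrow> int \<Rightarrow> int" where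
  "descent_margin s n k = (k - s) * (k + 1) ^ n - k ^ (n + 1)"

lemma f_rl_succ_less_iff:
  assumes "1 \<le> r" and "r \<le> k"
  shows "f_rl r l (k + 1) < f_rl r l k \<longleftrightarrow> 0 < descent_margin (r - 1) (nat (l - 1)) k"
    and "f_rl r l k < f_rl r l (k + 1) \<longleftrightarrow> descent_margin (r - 1) (nat (l - 1)) k < 0"
proof -
  let ?X = "(k - (r - 1)) * (k + 1) ^ nat (l - 1)"
  have "0 < real_of_int ?X" using assms by simp
  note cmp = cross_mult_less_iff[where c = 1 and d = 1,
      OF f_rl_succ_cross[OF assms] f_rl_pos[OF assms] this]
  show "f_rl r l (k + 1) < f_rl r l k \<longleftrightarrow> 0 < descent_margin (r - 1) (nat (l - 1)) k"
    using cmp(2) unfolding mult_1_right of_int_less_iff by (simp add: descent_margin_def)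
  show "f_rl r l k < f_rl r l (k + 1) \<longleftrightarrow> descent_margin (r - 1) (nat (l - 1)) k < 0"
    using cmp(1) unfolding mult_1_right of_int_less_iff by (simp add: descent_margin_def)
qed

lemma descent_margin_nonzero:
  assumes "1 \<le> k" and "1 \<le> n"
  shows "descent_margin s n k \<noteq> 0"
proof
  assume "descent_margin s n k = 0"
  then have "(k - s) * (k + 1) ^ n = k ^ (n + 1)" by (simp add: descent_margin_def)
  moreover have "k + 1 dvd (k - s) * (k + 1) ^ n"
    using \<open>1 \<le> n\<close> by (simp add: dvd_power)
  ultimately have "k + 1 dvd k ^ (n + 1)" by simp
  moreover have "coprime (k + 1) (k ^ (n + 1))" by simp
  ultimately have "is_unit (k + 1)" by (metis coprime_self dvd_refl coprime_common_divisor)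
  then show False using \<open>1 \<le> k\<close> by (simp add: zdvd1_eq)
qed

lemma power_mult_linear_gt_1_downward:
  fixes s x y :: real
  assumes "0 < s" and "1 \<le> n" and "0 < y" and "y < x"
    and "1 < (1 + x) ^ n * (1 - s * x)"
  shows "1 < (1 + y) ^ n * (1 - s * y)"
proof -
  define \<psi> where "\<psi> t = (1 + t) ^ n * (1 - s * t)" for t :: real
  define t\<^sub>0 where "t\<^sub>0 = (n - s) / (s * (n + 1))"
  have deriv: "DERIV \<psi> t :> (1 + t) ^ (n - 1) * ((n - s) - s * (n + 1) * t)" for t
  proof -
    have "(1 + t) ^ n = (1 + t) ^ (n - 1) * (1 + t)"
      using \<open>1 \<le> n\<close> by (simp flip: power_Suc2)
    moreover have "DERIV \<psi> t :> n * (1 + t) ^ (n - 1) * (1 - s * t) - s * (1 + t) ^ n"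
      unfolding \<psi>_def by (auto intro!: derivative_eq_intros simp: algebra_simps)
    ultimately show ?thesis by (simp add: algebra_simps)
  qed
  have "0 < s * (n + 1)" using \<open>0 < s\<close> by simp
  then have below_t\<^sub>0: "s * (n + 1) * t < n - s \<longleftrightarrow> t < t\<^sub>0" for t
    unfolding t\<^sub>0_def by (simp add: pos_less_divide_eq mult.commute)
  show ?thesis
  proof (cases "y < t\<^sub>0")
    case True
    have "\<psi> 0 < \<psi> y"
    proof (rule DERIV_pos_imp_increasing[OF \<open>0 < y\<close>])
      fix t assume "0 \<le> t" "t \<le> y"
      then have "0 < (1 + t) ^ (n - 1) * ((n - s) - s * (n + 1) * t)"
        using True below_t\<^sub>0[of t] by simp
      then show "\<exists>z. DERIV \<psi> t :> z \<and> 0 < z" using deriv by blast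
    qed
    then show ?thesis unfolding \<psi>_def by simp
  next
    case False
    have "\<psi> x \<le> \<psi> y"
    proof (rule DERIV_nonpos_imp_nonincreasing[of y x])
      show "y \<le> x" using \<open>y < x\<close> by simp
      fix t assume "y \<le> t" "t \<le> x"
      then have "(1 + t) ^ (n - 1) * ((n - s) - s * (n + 1) * t) \<le> 0"
        using False below_t\<^sub>0[of t] \<open>0 < y\<close> by (simp add: mult_nonneg_nonpos)
      then show "\<exists>z. DERIV \<psi> t :> z \<and> z \<le> 0" using deriv by blast
    qed
    then show ?thesis using assms(5) unfolding \<psi>_def by simp
  qed
qed

lemma descent_margin_pos_iff:
  assumes "0 < k"
  shows "0 < descent_margin s n k
    \<longleftrightarrow> 1 < (1 + 1 / of_int k) ^ n * (1 - of_int s * (1 / of_int k) :: real)"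
proof -
  have "(1 + 1 / of_int k) ^ n * (1 - of_int s * (1 / of_int k))
      = of_int ((k - s) * (k + 1) ^ n) / (of_int (k ^ (n + 1)) :: real)"
    using assms by (simp add: field_simps power_divide)
  moreover have "0 < (of_int (k ^ (n + 1)) :: real)" using assms by simp
  ultimately have "1 < (1 + 1 / of_int k) ^ n * (1 - of_int s * (1 / of_int k) :: real)
      \<longleftrightarrow> k ^ (n + 1) < (k - s) * (k + 1) ^ n"
    by (simp only: less_divide_eq_1_pos of_int_less_iff)
  then show ?thesis by (simp add: descent_margin_def)
qed

lemma descent_margin_pos_succ:
  assumes "1 \<le> s" and "1 \<le> n" and "1 \<le> k" and "0 < descent_margin s n k"
  shows "0 < descent_margin s n (k + 1)"
proof -
  have "1 < (1 + 1 / of_int (k + 1)) ^ n * (1 - of_int s * (1 / of_int (k + 1)) :: real)"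
  proof (rule power_mult_linear_gt_1_downward)
    show "1 < (1 + 1 / of_int k) ^ n * (1 - of_int s * (1 / of_int k) :: real)"
      using assms descent_margin_pos_iff[of k s n] by simp
    show "1 / of_int (k + 1) < (1 / of_int k :: real)"
      using \<open>1 \<le> k\<close> by (simp add: frac_less2)
  qed (use assms in auto)
  then show ?thesis using descent_margin_pos_iff[of "k + 1" s n] assms by simp
qed

lemma power_succ_mult_less_power_pred_mult:
  fixes K :: int
  assumes "2 \<le> n" and "int n < K"
  shows "(K + 1) ^ n * (K - int n) < (K - 1) ^ n * (K + int n)"
  using assms
proof (induction n rule: nat_induct_at_least)
  case base
  show ?case by (simp add: power2_eq_square algebra_simps)
next
  case (Suc n)
  have "0 < K - int n" "0 < (K + 1) * (K - int n - 1)" "0 \<le> (K - 1) ^ n"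
    using Suc.prems Suc.hyps by simp_all
  have factor_le: "(K + 1) * (K - int n - 1) * (K + int n) \<le> (K - 1) * (K + int n + 1) * (K - int n)"
    by (simp add: algebra_simps)
  have "(K + 1) ^ Suc n * (K - int (Suc n)) * (K - int n)
      = ((K + 1) ^ n * (K - int n)) * ((K + 1) * (K - int n - 1))"
    by (simp add: algebra_simps)
  also have "\<dots> < ((K - 1) ^ n * (K + int n)) * ((K + 1) * (K - int n - 1))"
    using Suc.IH Suc.prems \<open>0 < (K + 1) * (K - int n - 1)\<close> by (intro mult_strict_right_mono) auto
  also have "\<dots> = (K - 1) ^ n * ((K + 1) * (K - int n - 1) * (K + int n))"
    by (simp add: algebra_simps)
  also have "\<dots> \<le> (K - 1) ^ n * ((K - 1) * (K + int n + 1) * (K - int n))"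
    using factor_le \<open>0 \<le> (K - 1) ^ n\<close> by (rule mult_left_mono)
  also have "\<dots> = (K - 1) ^ Suc n * (K + int (Suc n)) * (K - int n)"
    by (simp add: algebra_simps)
  finally show ?case using \<open>0 < K - int n\<close> by simp
qed

lemma descent_margin_neg:
  fixes k s :: int
  assumes "s < k" and "2 \<le> n" and "int n \<le> 2 * s"
    and "2 * (int n - s) * k \<le> s * (int n + 1)"
  shows "descent_margin s n k < 0"
proof -
  have "(2 * (k + 1)) ^ n * (2 * k + 1 - int n) < (2 * k) ^ n * (2 * k + 1 + int n)"
    using power_succ_mult_less_power_pred_mult[of n "2 * k + 1"] assms
    by (simp add: add.assoc)
  then have "2 ^ n * ((k + 1) ^ n * (2 * k + 1 - int n)) < 2 ^ n * (k ^ n * (2 * k + 1 + int n))"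
    by (simp only: power_mult_distrib mult.assoc)
  then have ratio_bound: "(k + 1) ^ n * (2 * k + 1 - int n) < k ^ n * (2 * k + 1 + int n)"
    by simp
  have "0 < k - s" "0 < 2 * k + 1 - int n" using assms by simp_all
  have "(k - s) * (k + 1) ^ n * (2 * k + 1 - int n) < (k - s) * (k ^ n * (2 * k + 1 + int n))"
    using ratio_bound \<open>0 < k - s\<close> by (simp add: mult.assoc)
  also have "\<dots> = k ^ n * ((k - s) * (2 * k + 1 + int n))"
    by simp
  also have "\<dots> \<le> k ^ n * (k * (2 * k + 1 - int n))"
    using assms by (intro mult_left_mono) (simp_all add: algebra_simps)
  also have "\<dots> = k ^ (n + 1) * (2 * k + 1 - int n)"
    by simp
  finally have "(k - s) * (k + 1) ^ n < k ^ (n + 1)"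
    using \<open>0 < 2 * k + 1 - int n\<close> by (simp only: mult_less_cancel_right)
  then show ?thesis by (simp add: descent_margin_def)
qed

lemma binomial_three_terms_le:
  fixes j :: int
  assumes "0 \<le> j"
  shows "2 * j ^ (m + 2) + 2 * (int m + 2) * j ^ (m + 1) + (int m + 2) * (int m + 1) * j ^ m
    \<le> 2 * (j + 1) ^ (m + 2)"
proof (induction m)
  case 0
  show ?case by (simp add: power2_eq_square algebra_simps)
next
  case (Suc m)
  have "0 \<le> (int m + 2) * (int m + 1) * j ^ m" using assms by simp
  have "2 * j ^ (Suc m + 2) + 2 * (int (Suc m) + 2) * j ^ (Suc m + 1)
          + (int (Suc m) + 2) * (int (Suc m) + 1) * j ^ Suc m
        + (int m + 2) * (int m + 1) * j ^ m
      = (j + 1) * (2 * j ^ (m + 2) + 2 * (int m + 2) * j ^ (m + 1) + (int m + 2) * (int m + 1) * j ^ m)"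
    by (simp add: algebra_simps power_add power2_eq_square)
  also have "\<dots> \<le> (j + 1) * (2 * (j + 1) ^ (m + 2))"
    using Suc.IH assms by (intro mult_left_mono) auto
  also have "\<dots> = 2 * (j + 1) ^ (Suc m + 2)"
    by simp
  finally show ?case
    using \<open>0 \<le> (int m + 2) * (int m + 1) * j ^ m\<close> by linarith
qed

lemma descent_margin_pos:
  fixes j s a :: int
  assumes "1 \<le> s" and "1 \<le> a" and n: "int n = s + a" and "s < j"
    and large: "s * (s + 1 + 3 * a) \<le> 2 * a * j"
  shows "0 < descent_margin s n j"
proof -
  define m where "m = n - 2"
  have m: "n = m + 2" using assms unfolding m_def by linarith
  \<comment> \<open>\<open>E = 2 ((j - s) (j\<^sup>2 + n j + n (n - 1) / 2) - j\<^sup>3)\<close> for \<open>n = s + a\<close>\<close>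
  define E where "E = 2 * a * j * j - (s + a) * (s - a + 1) * j - s * (s + a) * (s + a - 1)"
  have "a * (3 * s + a - 1) \<le> 2 * a * j - (s + a) * (s - a + 1)"
    using large by (simp add: algebra_simps)
  then have "j * (a * (3 * s + a - 1)) \<le> j * (2 * a * j - (s + a) * (s - a + 1))"
    using \<open>s < j\<close> \<open>1 \<le> s\<close> by (intro mult_left_mono) auto
  moreover have "s * (s + 1 + 3 * a) * (3 * s + a - 1) \<le> 2 * a * j * (3 * s + a - 1)"
    using large assms by (intro mult_right_mono) auto
  moreover have "0 < s * (s * s + 6 * a * s + a * a + 4 * s - 1)"
  proof -
    have "0 \<le> s * s" "0 \<le> a * s" "0 \<le> a * a" using assms by simp_all
    then show ?thesis using assms by (intro mult_pos_pos) linarith+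
  qed
  moreover have "2 * E = 2 * (j * (2 * a * j - (s + a) * (s - a + 1))) - 2 * (s * (s + a) * (s + a - 1))"
    "s * (s + 1 + 3 * a) * (3 * s + a - 1) - 2 * (s * (s + a) * (s + a - 1))
       = s * (s * s + 6 * a * s + a * a + 4 * s - 1)"
    "2 * a * j * (3 * s + a - 1) = 2 * (j * (a * (3 * s + a - 1)))"
    unfolding E_def by (simp_all add: algebra_simps)
  ultimately have "0 < E" by linarith
  have sa: "int m + 2 = s + a" "int m + 1 = s + a - 1" using m n by simp_all
  have "(j - s) * (2 * j ^ (m + 2) + 2 * (s + a) * j ^ (m + 1) + (s + a) * (s + a - 1) * j ^ m)
      \<le> (j - s) * (2 * (j + 1) ^ (m + 2))"
    using binomial_three_terms_le[of j m, unfolded sa] assms by (intro mult_left_mono) simp_all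
  moreover have "(j - s) * (2 * j ^ (m + 2) + 2 * (s + a) * j ^ (m + 1) + (s + a) * (s + a - 1) * j ^ m)
      = 2 * j ^ (m + 2 + 1) + j ^ m * E"
    unfolding E_def by (simp add: algebra_simps power_add)
  moreover have "0 < j ^ m * E" using \<open>0 < E\<close> assms by simp
  ultimately show ?thesis unfolding descent_margin_def m by simp
qed

lemma m_rl_descent_margin:
  assumes "2 \<le> r" and "r < l"
  shows "r \<le> m_rl r l"
    and "0 < descent_margin (r - 1) (nat (l - 1)) (m_rl r l)"
    and "\<And>k. r \<le> k \<Longrightarrow> k < m_rl r l \<Longrightarrow> descent_margin (r - 1) (nat (l - 1)) k < 0"
proof -
  let ?D = "descent_margin (r - 1) (nat (l - 1))"
  define K\<^sub>0 where "K\<^sub>0 = r * (r + 3 * (l - r))"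
  have "r \<le> K\<^sub>0" using assms unfolding K\<^sub>0_def by simp
  have "0 < ?D K\<^sub>0"
  proof (rule descent_margin_pos)
    have "1 * r \<le> (2 * (l - r)) * r" using assms by (intro mult_right_mono) simp_all
    then have "r - 1 \<le> 2 * (l - r) * r" by linarith
    then have "(r - 1) * (r + 3 * (l - r)) \<le> (2 * (l - r) * r) * (r + 3 * (l - r))"
      using assms by (intro mult_right_mono) simp_all
    then show "(r - 1) * (r - 1 + 1 + 3 * (l - r)) \<le> 2 * (l - r) * K\<^sub>0"
      unfolding K\<^sub>0_def by (simp add: ac_simps)
    show "r - 1 < K\<^sub>0" using \<open>r \<le> K\<^sub>0\<close> by linarith
  qed (use assms in simp_all)
  have "0 < ?D (k + 1)" if "r \<le> k" "0 < ?D k" for k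
    using that assms by (intro descent_margin_pos_succ) simp_all
  then obtain K where "r \<le> K" and threshold: "\<And>k. r \<le> k \<Longrightarrow> 0 < ?D k \<longleftrightarrow> K \<le> k"
    using int_upward_closed_threshold[where P = "\<lambda>k. 0 < ?D k", OF \<open>r \<le> K\<^sub>0\<close> \<open>0 < ?D K\<^sub>0\<close>] by blast
  have "m_rl r l = K"
    unfolding m_rl_def
  proof (rule The_argmax_eq_peak[OF \<open>r \<le> K\<close>])
    fix k assume "r \<le> k" "k < K"
    then have "?D k < 0"
      using threshold[of k] descent_margin_nonzero[of k "nat (l - 1)" "r - 1"] assms by fastforce
    then show "f_rl r l k < f_rl r l (k + 1)" using f_rl_succ_less_iff(2) \<open>r \<le> k\<close> assms by simp
  next
    fix k assume "K \<le> k"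
    then have "0 < ?D k" using threshold \<open>r \<le> K\<close> by simp
    then show "f_rl r l (k + 1) < f_rl r l k" using f_rl_succ_less_iff(1) \<open>r \<le> K\<close> \<open>K \<le> k\<close> assms by simp
  qed
  then show "r \<le> m_rl r l" "0 < ?D (m_rl r l)"
    using \<open>r \<le> K\<close> threshold by simp_all
  show "?D k < 0" if "r \<le> k" "k < m_rl r l" for k
    using that threshold[of k] descent_margin_nonzero[of k "nat (l - 1)" "r - 1"] assms \<open>m_rl r l = K\<close>
    by fastforce
qed

lemma m_rl_lower_bound:
  assumes "2 \<le> r" and "r < l" and "l \<le> 2 * r - 1"
  shows "(r - 1) * l < 2 * (l - r) * m_rl r l"
proof (rule ccontr)
  assume "\<not> ?thesis"
  then have "descent_margin (r - 1) (nat (l - 1)) (m_rl r l) < 0"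
    using assms m_rl_descent_margin(1)[of r l] by (intro descent_margin_neg) simp_all
  then show False using m_rl_descent_margin(2)[of r l] assms by simp
qed

lemma m_rl_upper_bound:
  assumes "2 \<le> r" and "r < l"
  shows "2 * (l - r) * (m_rl r l - 1) < (r - 1) * (r + 3 * (l - r))"
proof (cases "m_rl r l = r")
  case True
  show ?thesis
    unfolding True using assms by (simp add: mult.commute)
next
  case False
  then have "r \<le> m_rl r l - 1" using m_rl_descent_margin(1)[OF assms] by simp
  show ?thesis
  proof (rule ccontr)
    assume "\<not> ?thesis"
    then have large: "(r - 1) * (r - 1 + 1 + 3 * (l - r)) \<le> 2 * (l - r) * (m_rl r l - 1)"
      by (simp only: not_less diff_add_cancel)
    have "0 < descent_margin (r - 1) (nat (l - 1)) (m_rl r l - 1)"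
      by (rule descent_margin_pos[OF _ _ _ _ large]) (use assms \<open>r \<le> m_rl r l - 1\<close> in simp_all)
    then show False
      using m_rl_descent_margin(3)[OF assms] \<open>r \<le> m_rl r l - 1\<close> by fastforce
  qed
qed

definition h_rl :: "int \<Rightarrow> int \<Rightarrow> int \<Rightarrow> int \<Rightarrow> int" where
  "h_rl r l m q = ffact_int q (nat (r - 1)) * (2 * r - l + 2 * (m - q) * (l - r))"

lemma h_rl_less_succ:
  assumes "2 \<le> r" and "r < l" and "2 * (l - r) * (m - 1) < (r - 1) * (r + 3 * (l - r))"
    and "r - 1 \<le> q" and "q \<le> m - 2"
  shows "h_rl r l m q < h_rl r l m (q + 1)"
proof -
  define c where "c = 2 * r - l + 2 * (m - q) * (l - r)"
  have "2 * 2 * (l - r) \<le> 2 * (m - q) * (l - r)" using assms by (intro mult_right_mono) simp_all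
  then have "r + 3 * (l - r) \<le> c" unfolding c_def by (simp add: algebra_simps)
  then have "(r - 1) * (r + 3 * (l - r)) \<le> (r - 1) * c" using assms by simp
  moreover have "2 * (l - r) * (q + 1) \<le> 2 * (l - r) * (m - 1)"
    using assms by (intro mult_left_mono) simp_all
  ultimately have "(q + 1 - (r - 1)) * c < (q + 1) * (c - 2 * (l - r))"
    using assms by (simp add: algebra_simps)
  moreover note cross_mult_less_iff(1)[where c = c and d = "c - 2 * (l - r)",
      OF ffact_int_succ ffact_int_pos, of "nat (r - 1)" q]
  ultimately show ?thesis
    using assms unfolding h_rl_def c_def by (simp add: algebra_simps)
qed

lemma h_rl_last_less:
  assumes "2 \<le> r" and "r \<le> m" and "(r - 1) * l < 2 * (l - r) * m"
  shows "h_rl r l m m < h_rl r l m (m - 1)"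
proof -
  have "m * (2 * r - l) < (m - (r - 1)) * l"
    using assms by (simp add: algebra_simps)
  moreover note cross_mult_less_iff(2)[where c = l and d = "2 * r - l",
      OF ffact_int_succ ffact_int_pos, of "nat (r - 1)" "m - 1"]
  ultimately show ?thesis
    using assms unfolding h_rl_def by (simp add: algebra_simps)
qed

theorem lemma4p3:
  fixes l r :: int
  assumes "r \<ge> 2" and "r + 1 \<le> l" and "l \<le> 2 * r - 1"
  defines "m \<equiv> m_rl r l"
  defines "h \<equiv> (\<lambda>q::int. ffact_int q (nat (r - 1)) * (2 * r - l + 2 * (m - q) * (l - r)))"
  shows "\<forall>q::int. 0 \<le> q \<and> q \<le> m \<and> q \<noteq> m - 1 \<longrightarrow> h q < h (m - 1)"
proof (intro allI impI)
  fix q assume q: "0 \<le> q \<and> q \<le> m \<and> q \<noteq> m - 1"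
  have "r < l" using assms by simp
  have h: "h = h_rl r l m" unfolding h_def h_rl_def by simp
  have "r \<le> m" using m_rl_descent_margin(1)[OF \<open>2 \<le> r\<close> \<open>r < l\<close>] by (simp add: m_def)
  consider "q < r - 1" | "r - 1 \<le> q" "q \<le> m - 2" | "q = m" using q by linarith
  then show "h q < h (m - 1)"
  proof cases
    case 1
    have "h (m - 1) = ffact_int (m - 1) (nat (r - 1)) * l"
      by (simp add: h_def algebra_simps)
    moreover have "0 < ffact_int (m - 1) (nat (r - 1))"
      using assms \<open>r \<le> m\<close> by (intro ffact_int_pos) simp
    ultimately have "0 < h (m - 1)" using assms by simp
    moreover have "h q = 0" using 1 by (simp add: h_def ffact_int_def)
    ultimately show ?thesis by simp
  next
    case 2
    then show ?thesis
      unfolding h using int_less_by_ascent[of "r - 1" "m - 1" "h_rl r l m"]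
        h_rl_less_succ m_rl_upper_bound assms \<open>r < l\<close> by (simp add: m_def)
  next
    case 3
    then show ?thesis
      unfolding h using h_rl_last_less m_rl_lower_bound assms \<open>r < l\<close> \<open>r \<le> m\<close> by (simp add: m_def)
  qed
qed

end
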